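(* Let $r:\mathbb{R}^2\to\mathbb{R}$ be a positive reference image and $s:\mathbb{R}^2\to\mathbb{R}$ a signed image, with Radon transform $\widetilde s(t,\theta)$ and RSCDT $\widehat s(t,\theta)$ with respect to $r$. Let $x_0,y_0\in\mathbb{R}$ and $s_1(x_1,x_2)=s(x_1-x_0,x_2-y_0)$. Then for every $\theta\in[0,\pi]$ the RSCDT of $s_1$ is $$\widehat{s_1}(t,\theta)=\Big((g^\theta)^{-1}\circ(\widetilde s^{+})^\star(t,\theta),\ \|\widetilde s^{+}(\cdot,\theta)\|_1,\ (g^\theta)^{-1}\circ(\widetilde s^{-})^\star(t,\theta),\ \|\widetilde s^{-}(\cdot,\theta)\|_1\Big),$$ where $g^\theta(t)=t-x_0\cos\theta-y_0\sin\theta$.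
   Context: Radon transform: $\widetilde s(t,\theta)=\int_{\mathbb{R}^2}s(\mathbf{x})\delta(t-\mathbf{x}\cdot\xi_\theta)\,d\mathbf{x}$ with $\xi_\theta=(\cos\theta,\sin\theta)^T$. For nonnegative integrable $p$ on $\mathbb{R}$, $F_p(x)=\int_{-\infty}^x p(u)\,du$ and $F^\dagger(y)=\inf\{x:F(x)>y\}$. SCDT of a signed 1D signal $f$ with respect to positive reference $\rho$: with $f^+=\max\{0,f\}$, $f^-=\max\{0,-f\}$, set $(f^\pm)^\star=F^\dagger_{f^\pm/\|f^\pm\|_1}\circ F_{\rho/\|\rho\|_1}$ if $f^\pm\neq0$ and $(f^\pm)^\star=0$ if $f^\pm=0$; $\mathrm{SCDT}_\rho(f)=((f^+)^\star,\|f^+\|_1,(f^-)^\star,\|f^-\|_1)$. RSCDT of $s$ w.r.t. $r$: $\widehat s(\cdot,\theta)=\mathrm{SCDT}_{\widetilde r(\cdot,\theta)}(\widetilde s(\cdot,\theta))=\big((\widetilde s^+)^\star(\cdot,\theta),\|\widetilde s^+(\cdot,\theta)\|_1,(\widetilde s^-)^\star(\cdot,\theta),\|\widetilde s^-(\cdot,\theta)\|_1\big)$ for each $\theta\in[0,\pi]$. *)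

theory Defs
  imports "HOL-Analysis.Analysis"
begin

text \<open>Radon transform: integral of s over the line x \<cdot> xi_theta = t, parametrised by
  arc length u along the direction xi_theta-perp = (-sin theta, cos theta).\<close>
definition radon :: "(real \<times> real \<Rightarrow> real) \<Rightarrow> real \<Rightarrow> real \<Rightarrow> real" where
  "radon s t \<theta> = (LINT u|lborel. s (t * cos \<theta> - u * sin \<theta>, t * sin \<theta> + u * cos \<theta>))"

definition cdf :: "(real \<Rightarrow> real) \<Rightarrow> real \<Rightarrow> real" where
  "cdf p x = (LINT u:{..x}|lborel. p u)"

definition gen_inv :: "(real \<Rightarrow> real) \<Rightarrow> real \<Rightarrow> real" where
  "gen_inv F y = Inf {x. F x > y}"

definition l1norm :: "(real \<Rightarrow> real) \<Rightarrow> real" where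
  "l1norm f = (LINT u|lborel. \<bar>f u\<bar>)"

definition pos_part :: "(real \<Rightarrow> real) \<Rightarrow> real \<Rightarrow> real" where
  "pos_part f = (\<lambda>t. max 0 (f t))"

definition neg_part :: "(real \<Rightarrow> real) \<Rightarrow> real \<Rightarrow> real" where
  "neg_part f = (\<lambda>t. max 0 (- f t))"

text \<open>(p)^star w.r.t. reference rho; p is regarded as the zero element of L^1 iff its
  L^1 norm vanishes.\<close>
definition cdt_star :: "(real \<Rightarrow> real) \<Rightarrow> (real \<Rightarrow> real) \<Rightarrow> real \<Rightarrow> real" where
  "cdt_star \<rho> p = (if l1norm p = 0 then (\<lambda>_. 0)
      else gen_inv (cdf (\<lambda>u. p u / l1norm p)) \<circ> cdf (\<lambda>u. \<rho> u / l1norm \<rho>))"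

definition SCDT :: "(real \<Rightarrow> real) \<Rightarrow> (real \<Rightarrow> real)
     \<Rightarrow> (real \<Rightarrow> real) \<times> real \<times> (real \<Rightarrow> real) \<times> real" where
  "SCDT \<rho> f = (cdt_star \<rho> (pos_part f), l1norm (pos_part f),
                cdt_star \<rho> (neg_part f), l1norm (neg_part f))"

definition RSCDT :: "(real \<times> real \<Rightarrow> real) \<Rightarrow> (real \<times> real \<Rightarrow> real) \<Rightarrow> real
     \<Rightarrow> (real \<Rightarrow> real) \<times> real \<times> (real \<Rightarrow> real) \<times> real" where
  "RSCDT r s \<theta> = SCDT (\<lambda>t. radon r t \<theta>) (\<lambda>t. radon s t \<theta>)"

end

theory Submission
  imports Defs
begin

text \<open>Translating the image by \<open>(x\<^sub>0, y\<^sub>0)\<close> translates every Radon projection by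
  \<open>x\<^sub>0 cos \<theta> + y\<^sub>0 sin \<theta>\<close>. Positive and negative parts and \<open>L\<^sup>1\<close> norms commute with translations,
  and the CDF of a translate is the translate of the CDF, so its generalised inverse is shifted by
  the same amount. The last step needs care: an infimum commutes with a translation only when the
  set is nonempty and bounded below, which for a superlevel set of a normalised CDF means a level
  strictly between 0 and 1. The reference CDF takes only such values because the Radon projection
  of a positive integrable image is integrable and almost everywhere positive, by rotation
  invariance of Lebesgue measure on the plane.\<close>

lemma lborel_integral_translate:
  fixes f :: "real \<Rightarrow> 'a::{banach, second_countable_topology}"
  shows "(\<integral>u. f (u + c) \<partial>lborel) = (\<integral>u. f u \<partial>lborel)"
  using lborel_integral_real_affine[of 1 f c] by (simp add: add.commute)

lemma tendsto_integral_at_bot: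
  fixes f :: "real \<Rightarrow> 'a::{banach, second_countable_topology}"
  assumes [measurable_cong]: "sets M = sets borel" and [measurable]: "integrable M f"
  shows "((\<lambda>y. \<integral>x. indicator {..y} x *\<^sub>R f x \<partial>M) \<longlongrightarrow> 0) at_bot"
proof (rule tendsto_at_botI_sequentially)
  fix X :: "nat \<Rightarrow> real" assume "filterlim X at_bot sequentially"
  show "(\<lambda>n. \<integral>x. indicator {..X n} x *\<^sub>R f x \<partial>M) \<longlonglongrightarrow> 0"
  proof (rule integral_dominated_convergence[where w = "\<lambda>x. norm (f x)" and f = "\<lambda>_. 0", simplified])
    show "integrable M (\<lambda>x. norm (f x))"
      by (rule integrable_norm) fact
    show "AE x in M. (\<lambda>n. indicator {..X n} x *\<^sub>R f x) \<longlonglongrightarrow> 0"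
    proof
      fix x
      from \<open>filterlim X at_bot sequentially\<close>
      have "eventually (\<lambda>n. X n < x) sequentially"
        unfolding filterlim_at_bot_dense by auto
      then show "(\<lambda>n. indicator {..X n} x *\<^sub>R f x) \<longlonglongrightarrow> 0"
        by (intro tendsto_eventually) (auto elim!: eventually_mono split: split_indicator)
    qed
  qed (auto split: split_indicator)
qed

lemma set_integral_pos_AE:
  fixes g :: "'a \<Rightarrow> real"
  assumes "set_integrable M A g" "A \<in> sets M" "emeasure M A \<noteq> 0"
    and pos: "AE x in M. x \<in> A \<longrightarrow> 0 < g x"
  shows "0 < (LINT x:A|M. g x)"
proof -
  have int: "integrable M (\<lambda>x. indicator A x * g x)"
    using assms(1) by (simp add: set_integrable_def)
  have nonneg: "AE x in M. 0 \<le> indicator A x * g x"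
    using pos by eventually_elim (auto simp: indicator_def)
  have "(LINT x:A|M. g x) \<noteq> 0"
  proof
    assume "(LINT x:A|M. g x) = 0"
    then have "AE x in M. indicator A x * g x = 0"
      using integral_nonneg_eq_0_iff_AE[OF int nonneg] by (simp add: set_lebesgue_integral_def)
    then have "AE x in M. x \<notin> A"
      using pos by eventually_elim (auto simp: indicator_def)
    then show False
      using AE_iff_null_sets[OF assms(2)] assms(3) by (simp add: null_sets_def)
  qed
  moreover have "0 \<le> (LINT x:A|M. g x)"
    using integral_nonneg_AE[OF nonneg] by (simp add: set_lebesgue_integral_def)
  ultimately show ?thesis
    by linarith
qed

lemma nn_integral_lborel_rotation:
  fixes f :: "real \<times> real \<Rightarrow> ennreal"
  assumes [measurable]: "f \<in> borel_measurable borel" and sc: "S\<^sup>2 + C\<^sup>2 = 1"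
  shows "(\<integral>\<^sup>+t. \<integral>\<^sup>+u. f (t * C - u * S, t * S + u * C) \<partial>lborel \<partial>lborel)
       = (\<integral>\<^sup>+x. \<integral>\<^sup>+y. f (x, y) \<partial>lborel \<partial>lborel)"
proof (cases "S = 0")
  case False
  (* Substitute x = t C - u S inside, swap the integrals, then substitute y = (t - x C) / S;
     each substitution contributes a factor |S|. *)
  have inner: "(\<integral>\<^sup>+x. f (x, (t - x * C) / S) \<partial>lborel)
      = \<bar>S\<bar> * (\<integral>\<^sup>+u. f (t * C - u * S, t * S + u * C) \<partial>lborel)" for t
  proof -
    have "(t - (t * C + - S * u) * C) / S = t * S + u * C" for u
    proof -
      have "t - (t * C + - S * u) * C = S * (t * S + u * C)"
        using sc by algebra
      then show ?thesis
        using False by simp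
    qed
    then show ?thesis
      using nn_integral_real_affine[of "\<lambda>x. f (x, (t - x * C) / S)" "- S" "t * C"] False
      by (simp add: mult.commute)
  qed
  have outer: "(\<integral>\<^sup>+t. f (x, (t - x * C) / S) \<partial>lborel) = \<bar>S\<bar> * (\<integral>\<^sup>+y. f (x, y) \<partial>lborel)" for x
    using nn_integral_real_affine[of "\<lambda>t. f (x, (t - x * C) / S)" S "x * C"] False by simp
  have "\<bar>S\<bar> * (\<integral>\<^sup>+t. \<integral>\<^sup>+u. f (t * C - u * S, t * S + u * C) \<partial>lborel \<partial>lborel)
      = (\<integral>\<^sup>+t. \<integral>\<^sup>+x. f (x, (t - x * C) / S) \<partial>lborel \<partial>lborel)"
    by (simp add: inner nn_integral_cmult)
  also have "\<dots> = (\<integral>\<^sup>+x. \<integral>\<^sup>+t. f (x, (t - x * C) / S) \<partial>lborel \<partial>lborel)"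
    by (rule lborel_pair.Fubini') measurable
  also have "\<dots> = \<bar>S\<bar> * (\<integral>\<^sup>+x. \<integral>\<^sup>+y. f (x, y) \<partial>lborel \<partial>lborel)"
    by (simp add: outer nn_integral_cmult)
  finally show ?thesis
    using False by (simp add: ennreal_mult_cancel_left)
next
  case True
  then have "\<bar>C\<bar> = 1"
    using sc by (simp add: abs_square_eq_1)
  then have "C \<noteq> 0"
    by auto
  have "(\<integral>\<^sup>+u. f (x, u * C) \<partial>lborel) = (\<integral>\<^sup>+y. f (x, y) \<partial>lborel)" for x
    using nn_integral_real_affine[of "\<lambda>y. f (x, y)" C 0] \<open>\<bar>C\<bar> = 1\<close> \<open>C \<noteq> 0\<close> by (simp add: mult.commute)
  then have "(\<integral>\<^sup>+t. \<integral>\<^sup>+u. f (t * C - u * S, t * S + u * C) \<partial>lborel \<partial>lborel)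
      = (\<integral>\<^sup>+t. \<integral>\<^sup>+y. f (t * C, y) \<partial>lborel \<partial>lborel)"
    using True by simp
  also have "\<dots> = (\<integral>\<^sup>+x. \<integral>\<^sup>+y. f (x, y) \<partial>lborel \<partial>lborel)"
  proof -
    have "(\<lambda>x. \<integral>\<^sup>+y. f (x, y) \<partial>lborel) \<in> borel_measurable lborel"
      by measurable
    then show ?thesis
      using nn_integral_real_affine[of "\<lambda>x. \<integral>\<^sup>+y. f (x, y) \<partial>lborel" C 0] \<open>\<bar>C\<bar> = 1\<close> \<open>C \<noteq> 0\<close>
      by (simp add: mult.commute)
  qed
  finally show ?thesis .
qed

lemma l1norm_translate: "l1norm (\<lambda>u. p (u - c)) = l1norm p"
  unfolding l1norm_def using lborel_integral_translate[of "\<lambda>u. \<bar>p (u - c)\<bar>" c] by simp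

lemma cdf_translate: "cdf (\<lambda>u. p (u - c)) x = cdf p (x - c)"
  unfolding cdf_def set_lebesgue_integral_def
  using lborel_integral_translate[of "\<lambda>u. indicator {..x} u *\<^sub>R p (u - c)" c]
  by (simp add: indicator_def le_diff_eq)

lemma gen_inv_translate:
  assumes "{z. y < F z} \<noteq> {}" "bdd_below {z. y < F z}"
  shows "gen_inv (\<lambda>x. F (x - c)) y = gen_inv F y + c"
proof -
  have "{x. y < F (x - c)} = (\<lambda>z. c + z) ` {z. y < F z}"
    by (auto simp: image_iff intro!: exI[where x = "_ - c"])
  then show ?thesis
    using Inf_add_eq[of "\<lambda>z. z" _ c] assms unfolding gen_inv_def by (simp add: add.commute)
qed

lemma cdf_normalized_tendsto:
  fixes p :: "real \<Rightarrow> real"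
  assumes nonneg: "\<And>u. 0 \<le> p u" and "l1norm p \<noteq> 0"
  shows "(cdf (\<lambda>u. p u / l1norm p) \<longlongrightarrow> 0) at_bot"
    and "(cdf (\<lambda>u. p u / l1norm p) \<longlongrightarrow> 1) at_top"
proof -
  have "integrable lborel (\<lambda>u. \<bar>p u\<bar>)"
    using \<open>l1norm p \<noteq> 0\<close> not_integrable_integral_eq unfolding l1norm_def by blast
  then have p: "integrable lborel p"
    using nonneg by simp
  have cdf_eq: "cdf (\<lambda>u. p u / l1norm p) = (\<lambda>y. (\<integral>x. indicator {..y} x *\<^sub>R p x \<partial>lborel) / l1norm p)"
    unfolding cdf_def set_lebesgue_integral_def by auto
  show "(cdf (\<lambda>u. p u / l1norm p) \<longlongrightarrow> 0) at_bot"
    unfolding cdf_eq using tendsto_divide_zero[OF tendsto_integral_at_bot[OF _ p]] by simp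
  have "l1norm p = (\<integral>x. p x \<partial>lborel)"
    unfolding l1norm_def using nonneg by simp
  then show "(cdf (\<lambda>u. p u / l1norm p) \<longlongrightarrow> 1) at_top"
    unfolding cdf_eq
    using tendsto_divide[OF tendsto_integral_at_top[OF _ p] tendsto_const[of "l1norm p"]] \<open>l1norm p \<noteq> 0\<close>
    by simp
qed

lemma cdf_normalized_superlevel_set:
  fixes p :: "real \<Rightarrow> real"
  assumes "\<And>u. 0 \<le> p u" "l1norm p \<noteq> 0" "y \<in> {0<..<1}"
  shows "{z. y < cdf (\<lambda>u. p u / l1norm p) z} \<noteq> {}"
    and "bdd_below {z. y < cdf (\<lambda>u. p u / l1norm p) z}"
proof -
  let ?F = "cdf (\<lambda>u. p u / l1norm p)"
  have "eventually (\<lambda>z. y < ?F z) at_top"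
    using order_tendstoD(1)[OF cdf_normalized_tendsto(2)[OF assms(1,2)]] assms(3) by simp
  then show "{z. y < ?F z} \<noteq> {}"
    by (auto simp: eventually_at_top_linorder)
  have "eventually (\<lambda>z. ?F z < y) at_bot"
    using order_tendstoD(2)[OF cdf_normalized_tendsto(1)[OF assms(1,2)]] assms(3) by simp
  then obtain N where "\<And>z. z \<le> N \<Longrightarrow> ?F z < y"
    by (auto simp: eventually_at_bot_linorder)
  then show "bdd_below {z. y < ?F z}"
    by (intro bdd_belowI[of _ N]) (meson less_asym mem_Collect_eq nle_le)
qed

lemma cdf_normalized_strict_bounds:
  fixes \<rho> :: "real \<Rightarrow> real"
  assumes int: "integrable lborel \<rho>" and nonneg: "\<And>t. 0 \<le> \<rho> t" and pos: "AE t in lborel. 0 < \<rho> t"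
  shows "cdf (\<lambda>u. \<rho> u / l1norm \<rho>) t \<in> {0<..<1}"
proof -
  have set_int: "set_integrable lborel A \<rho>" if "A \<in> sets lborel" for A
    using integrable_mult_indicator[OF that int] by (simp add: set_integrable_def)
  have pos_on: "0 < (LINT u:A|lborel. \<rho> u)" if "A \<in> sets lborel" "{l<..<l + 1} \<subseteq> A" for A l
  proof (rule set_integral_pos_AE[OF set_int])
    show "emeasure lborel A \<noteq> 0"
      using emeasure_mono[OF that(2), of lborel] that(1) by auto
  qed (use that pos in auto)
  define a where "a = (LINT u:{..t}|lborel. \<rho> u)"
  define b where "b = (LINT u:{t<..}|lborel. \<rho> u)"
  have "0 < a"
    unfolding a_def by (rule pos_on[of _ "t - 1"]) auto
  have "0 < b"
    unfolding b_def by (rule pos_on[of _ t]) auto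
  have "l1norm \<rho> = (LINT u:{..t} \<union> {t<..}|lborel. \<rho> u)"
  proof -
    have "{..t} \<union> {t<..} = UNIV"
      by auto
    then show ?thesis
      unfolding l1norm_def set_lebesgue_integral_def using nonneg by simp
  qed
  also have "\<dots> = a + b"
    unfolding a_def b_def by (rule set_integral_Un) (auto intro: set_int)
  finally have "cdf (\<lambda>u. \<rho> u / l1norm \<rho>) t = a / (a + b)"
    unfolding cdf_def a_def by simp
  then show ?thesis
    using \<open>0 < a\<close> \<open>0 < b\<close> by simp
qed

lemma cdt_star_translate:
  fixes p \<rho> :: "real \<Rightarrow> real"
  assumes "\<And>u. 0 \<le> p u" and \<rho>: "\<And>t. cdf (\<lambda>u. \<rho> u / l1norm \<rho>) t \<in> {0<..<1}"
  shows "cdt_star \<rho> (\<lambda>t. p (t - c))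
    = (if l1norm p = 0 then (\<lambda>_. 0) else (\<lambda>t. t + c) \<circ> cdt_star \<rho> p)"
proof (cases "l1norm p = 0")
  case False
  have shift: "gen_inv (\<lambda>x. cdf (\<lambda>u. p u / l1norm p) (x - c)) y
      = gen_inv (cdf (\<lambda>u. p u / l1norm p)) y + c" if "y \<in> {0<..<1}" for y
    by (rule gen_inv_translate) (use cdf_normalized_superlevel_set[OF assms(1) False that] in auto)
  have cdf_eq: "cdf (\<lambda>u. p (u - c) / l1norm p) = (\<lambda>x. cdf (\<lambda>u. p u / l1norm p) (x - c))"
    using cdf_translate[of "\<lambda>u. p u / l1norm p" c] by auto
  show ?thesis
    using False shift[OF \<rho>] unfolding cdt_star_def l1norm_translate cdf_eq by (simp add: fun_eq_iff)
qed (simp add: cdt_star_def l1norm_translate)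

lemma SCDT_translate:
  assumes "\<And>t. cdf (\<lambda>u. \<rho> u / l1norm \<rho>) t \<in> {0<..<1}"
  shows "SCDT \<rho> (\<lambda>t. f (t - c)) =
    (if l1norm (pos_part f) = 0 then (\<lambda>_. 0) else (\<lambda>t. t + c) \<circ> cdt_star \<rho> (pos_part f),
     l1norm (pos_part f),
     if l1norm (neg_part f) = 0 then (\<lambda>_. 0) else (\<lambda>t. t + c) \<circ> cdt_star \<rho> (neg_part f),
     l1norm (neg_part f))"
proof -
  have "pos_part (\<lambda>t. f (t - c)) = (\<lambda>t. pos_part f (t - c))"
    and "neg_part (\<lambda>t. f (t - c)) = (\<lambda>t. neg_part f (t - c))"
    by (simp_all add: pos_part_def neg_part_def)
  moreover have "0 \<le> pos_part f u" "0 \<le> neg_part f u" for u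
    by (simp_all add: pos_part_def neg_part_def)
  ultimately show ?thesis
    unfolding SCDT_def
    by (simp add: cdt_star_translate[where p = "pos_part f", OF _ assms]
        cdt_star_translate[where p = "neg_part f", OF _ assms] l1norm_translate)
qed

lemma radon_translate:
  "radon (\<lambda>(x1, x2). s (x1 - x\<^sub>0, x2 - y\<^sub>0)) t \<theta> = radon s (t - (x\<^sub>0 * cos \<theta> + y\<^sub>0 * sin \<theta>)) \<theta>"
proof -
  define d where "d = y\<^sub>0 * cos \<theta> - x\<^sub>0 * sin \<theta>"
  have sin2: "sin \<theta> * sin \<theta> = 1 - cos \<theta> * cos \<theta>"
    using sin_cos_squared_add[of \<theta>] by (simp add: power2_eq_square)
  have "radon (\<lambda>(x1, x2). s (x1 - x\<^sub>0, x2 - y\<^sub>0)) t \<theta>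
      = (LINT u|lborel. s (t * cos \<theta> - (u + d) * sin \<theta> - x\<^sub>0, t * sin \<theta> + (u + d) * cos \<theta> - y\<^sub>0))"
    unfolding radon_def
    by (simp add: lborel_integral_translate[of "\<lambda>u. s (t * cos \<theta> - u * sin \<theta> - x\<^sub>0, t * sin \<theta> + u * cos \<theta> - y\<^sub>0)"])
  also have "\<dots> = radon s (t - (x\<^sub>0 * cos \<theta> + y\<^sub>0 * sin \<theta>)) \<theta>"
    unfolding radon_def d_def by (simp add: algebra_simps sin2)
  finally show ?thesis .
qed

lemma radon_positive_integrable:
  fixes r :: "real \<times> real \<Rightarrow> real"
  assumes pos: "\<And>x. 0 < r x" and int: "integrable lborel r"
  shows "integrable lborel (\<lambda>t. radon r t \<theta>)"
    and "0 \<le> radon r t \<theta>"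
    and "AE t in lborel. 0 < radon r t \<theta>"
proof -
  have [measurable]: "r \<in> borel_measurable borel"
    using borel_measurable_integrable[OF int] by (simp only: measurable_lborel2)
  define f where "f = (\<lambda>(t, u). r (t * cos \<theta> - u * sin \<theta>, t * sin \<theta> + u * cos \<theta>))"
  have [measurable]: "f \<in> borel_measurable (lborel \<Otimes>\<^sub>M lborel)"
    unfolding f_def by measurable
  have radon_eq: "radon r t \<theta> = (\<integral>u. f (t, u) \<partial>lborel)" for t
    unfolding radon_def f_def by simp
  have "(\<integral>\<^sup>+z. f z \<partial>(lborel \<Otimes>\<^sub>M lborel))
      = (\<integral>\<^sup>+t. \<integral>\<^sup>+u. r (t * cos \<theta> - u * sin \<theta>, t * sin \<theta> + u * cos \<theta>) \<partial>lborel \<partial>lborel)"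
    by (simp add: lborel.nn_integral_fst[symmetric] f_def)
  also have "\<dots> = (\<integral>\<^sup>+x. \<integral>\<^sup>+y. r (x, y) \<partial>lborel \<partial>lborel)"
    by (rule nn_integral_lborel_rotation) auto
  also have "\<dots> = (\<integral>\<^sup>+z. r z \<partial>lborel)"
  proof -
    have "r \<in> borel_measurable (lborel \<Otimes>\<^sub>M lborel)"
      by (simp add: lborel_prod)
    then show ?thesis
      using lborel.nn_integral_fst[of "\<lambda>z. ennreal (r z)" lborel] by (simp add: lborel_prod)
  qed
  also have "\<dots> < \<infinity>"
    using integrableD(2)[OF int] pos by (simp add: less_imp_le less_top[symmetric])
  finally have f_int: "integrable (lborel \<Otimes>\<^sub>M lborel) f"
    by (intro integrableI_nonneg) (auto simp: f_def less_imp_le pos)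
  show "integrable lborel (\<lambda>t. radon r t \<theta>)"
    unfolding radon_eq by (rule lborel_pair.integrable_fst'[OF f_int])
  show "0 \<le> radon r t \<theta>"
    unfolding radon_eq by (intro integral_nonneg_AE) (simp add: f_def less_imp_le pos)
  show "AE t in lborel. 0 < radon r t \<theta>"
    using lborel_pair.AE_integrable_fst'[OF f_int]
  proof eventually_elim
    case (elim t)
    have "0 < (LINT u:UNIV|lborel. f (t, u))"
      by (rule set_integral_pos_AE) (use elim pos in \<open>auto simp: set_integrable_def f_def\<close>)
    then show ?case
      unfolding radon_eq by (simp add: set_lebesgue_integral_def)
  qed
qed

theorem mainTheorem2:
  fixes r s :: "real \<times> real \<Rightarrow> real" and x\<^sub>0 y\<^sub>0 \<theta> :: real
  assumes r_pos: "\<And>x. r x > 0"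
    and r_int: "integrable lborel r"
    and s_int: "integrable lborel s"
    and \<theta>: "\<theta> \<in> {0..pi}"
  shows "let s\<^sub>1 = (\<lambda>(x1, x2). s (x1 - x\<^sub>0, x2 - y\<^sub>0));
             g_inv = (\<lambda>t. t + x\<^sub>0 * cos \<theta> + y\<^sub>0 * sin \<theta>);
             sp = pos_part (\<lambda>t. radon s t \<theta>);
             sn = neg_part (\<lambda>t. radon s t \<theta>);
             \<rho> = (\<lambda>t. radon r t \<theta>)
         in RSCDT r s\<^sub>1 \<theta> =
            (if l1norm sp = 0 then (\<lambda>_. 0) else g_inv \<circ> cdt_star \<rho> sp,
             l1norm sp,
             if l1norm sn = 0 then (\<lambda>_. 0) else g_inv \<circ> cdt_star \<rho> sn,
             l1norm sn)"
proof -
  define c where "c = x\<^sub>0 * cos \<theta> + y\<^sub>0 * sin \<theta>"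
  have \<rho>: "cdf (\<lambda>u. radon r u \<theta> / l1norm (\<lambda>t. radon r t \<theta>)) t \<in> {0<..<1}" for t
    by (rule cdf_normalized_strict_bounds) (use radon_positive_integrable[OF r_pos r_int] in auto)
  have "(\<lambda>t. t + x\<^sub>0 * cos \<theta> + y\<^sub>0 * sin \<theta>) = (\<lambda>t. t + c)"
    unfolding c_def by (simp add: algebra_simps)
  moreover have "RSCDT r (\<lambda>(x1, x2). s (x1 - x\<^sub>0, x2 - y\<^sub>0)) \<theta>
      = SCDT (\<lambda>t. radon r t \<theta>) (\<lambda>t. radon s (t - c) \<theta>)"
    unfolding RSCDT_def radon_translate c_def ..
  ultimately show ?thesis
    unfolding Let_def by (simp add: SCDT_translate[OF \<rho>, of "\<lambda>t. radon s t \<theta>" c])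
qed

end
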